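(* If $\succ=(\succ_s)_{s\in S}$ is a priority profile in which every $\succ_s$ is acyclic, then the set $f^\succ$ of student optimal stable matchings for $\succ$ is nonempty (in particular the set $\mathcal{S}^\succ$ of stable matchings for $\succ$ is nonempty).
   Context: A binary relation $B$ on $X$ is asymmetric if $(x,y)\in B$ implies $(y,x)\notin B$; acyclic if for all $K\ge2$ and $x_0,\dots,x_K\in X$, [$(x_{k-1},x_k)\in B$ and $(x_k,x_{k-1})\notin B$ for all $k$] implies $(x_K,x_0)\notin B$. School choice setup: $I$ is a finite set of students with $|I|\ge 3$, $S$ a finite set of schools. Each student $i$ has a total order $P_i$ on $S\cup\{\emptyset\}$; $sR_is'$ means $sP_is'$ or $s=s'$. Each school $s$ has capacity $q_s\in\mathbb{Z}_{++}$ and an asymmetric priority relation $\succ_s$ on $I$. A matching $\mu$ assigns each $i$ to $\mu(i)\in S\cup\{\emptyset\}$, $\mu(s)=\{i:\mu(i)=s\}$, $|\mu(s)|\le q_s$. $\mu$ is stable for $\succ$ if it is individually rational ($\mu(i)R_i\emptyset$ for all $i$), non-wasteful ($sP_i\mu(i)$ implies $|\mu(s)|=q_s$) and fair (no $s$, $j\in\mu(s)$, $i\notin\mu(s)$ with $sR_i\mu(i)$ and $(i,j)\in\succ_s$). $\mu$ is Pareto dominated by $\mu'$ if $\mu'(i)R_i\mu(i)$ for all $i$ and $\mu'(i)P_i\mu(i)$ for some $i$. A student optimal stable matching (SOSM) for $\succ$ is a stable matching for $\succ$ not Pareto dominated by any stable matching for $\succ$; $\mathcal{S}^\succ$ and $f^\succ\subseteq\mathcal{S}^\succ$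 denote the sets of stable matchings and SOSMs for $\succ$. *)

theory Defs
  imports Main
begin

text \<open>Students have type 'i (carrier set I), schools type 's (carrier set S).
  The outside option (being unassigned) is None; school s is Some s.\<close>

definition acyclic_rel_on :: "'a set \<Rightarrow> 'a rel \<Rightarrow> bool" where
  "acyclic_rel_on X B \<longleftrightarrow>
     (\<forall>K::nat. \<forall>x::nat \<Rightarrow> 'a. K \<ge> 2 \<longrightarrow> (\<forall>k\<le>K. x k \<in> X) \<longrightarrow>
        (\<forall>k\<in>{1..K}. (x (k-1), x k) \<in> B \<and> (x k, x (k-1)) \<notin> B) \<longrightarrow>
        (x K, x 0) \<notin> B)"

definition weakpref :: "('s option) rel \<Rightarrow> 's option \<Rightarrow> 's option \<Rightarrow> bool" where
  "weakpref P a b \<longleftrightarrow> (a, b) \<in> P \<or> a = b"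

definition is_matching :: "'i set \<Rightarrow> 's set \<Rightarrow> ('s \<Rightarrow> nat) \<Rightarrow> ('i \<Rightarrow> 's option) \<Rightarrow> bool" where
  "is_matching I S q \<mu> \<longleftrightarrow>
     (\<forall>i\<in>I. \<mu> i \<in> insert None (Some ` S)) \<and>
     (\<forall>i. i \<notin> I \<longrightarrow> \<mu> i = None) \<and>
     (\<forall>s\<in>S. card {i\<in>I. \<mu> i = Some s} \<le> q s)"

definition stable :: "'i set \<Rightarrow> 's set \<Rightarrow> ('i \<Rightarrow> ('s option) rel) \<Rightarrow> ('s \<Rightarrow> nat)
    \<Rightarrow> ('s \<Rightarrow> 'i rel) \<Rightarrow> ('i \<Rightarrow> 's option) \<Rightarrow> bool" where
  "stable I S P q pri \<mu> \<longleftrightarrow>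
     is_matching I S q \<mu> \<and>
     (\<forall>i\<in>I. weakpref (P i) (\<mu> i) None) \<and>
     (\<forall>i\<in>I. \<forall>s\<in>S. (Some s, \<mu> i) \<in> P i \<longrightarrow> card {j\<in>I. \<mu> j = Some s} = q s) \<and>
     \<not> (\<exists>s\<in>S. \<exists>j\<in>I. \<exists>i\<in>I. \<mu> j = Some s \<and> \<mu> i \<noteq> Some s \<and>
            weakpref (P i) (Some s) (\<mu> i) \<and> (i, j) \<in> pri s)"

definition pareto_dominates :: "'i set \<Rightarrow> ('i \<Rightarrow> ('s option) rel)
    \<Rightarrow> ('i \<Rightarrow> 's option) \<Rightarrow> ('i \<Rightarrow> 's option) \<Rightarrow> bool" where
  "pareto_dominates I P \<mu>' \<mu> \<longleftrightarrow>
     (\<forall>i\<in>I. weakpref (P i) (\<mu>' i) (\<mu> i)) \<and> (\<exists>i\<in>I. (\<mu>' i, \<mu> i) \<in> P i)"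

definition stable_set where
  "stable_set I S P q pri = {\<mu>. stable I S P q pri \<mu>}"

definition SOSM_set where
  "SOSM_set I S P q pri =
     {\<mu> \<in> stable_set I S P q pri. \<not> (\<exists>\<mu>'\<in>stable_set I S P q pri. pareto_dominates I P \<mu>' \<mu>)}"

end

theory Submission
  imports Defs
begin

text \<open>An acyclic priority relation on finitely many students extends to a ranking by
  natural numbers, which turns each school's priority into a strict one. For strict
  priorities a stable matching exists by a deferred-acceptance argument, recast as a
  maximality argument over sets of rejections: a maximal family of justified
  rejections leaves no school over-demanded, and letting every student take her
  favourite school not yet rejecting her gives a stable matching. Finally, Pareto
  domination strictly increases the total number of options the students' assignments
  beat, so a stable matching maximising this quantity is student optimal.\<close>

lemma acyclic_if_acyclic_rel_on:
  assumes asym: "asym_on I B" and "B \<subseteq> I \<times> I" and acyc: "acyclic_rel_on I B"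
  shows "acyclic B"
  unfolding acyclic_def
proof (intro allI notI)
  fix x assume "(x, x) \<in> B\<^sup>+"
  then obtain n where "n > 0" "(x, x) \<in> B ^^ n" using trancl_power by blast
  then obtain c where c: "c 0 = x" "c n = x" "\<And>k. k < n \<Longrightarrow> (c k, c (Suc k)) \<in> B"
    by (metis relpow_fun_conv)
  have in_I: "c k \<in> I" if "k < n" for k
    using c(3)[OF that] \<open>B \<subseteq> I \<times> I\<close> by blast
  have one_way: "(c (Suc k), c k) \<notin> B" if "k < n" for k
    using c(3)[OF that] asym \<open>B \<subseteq> I \<times> I\<close> by (blast dest: asym_onD)
  consider "n = 1" | "n = 2" | "n \<ge> 3" using \<open>n > 0\<close> by linarith
  then show False
  proof cases
    case 1
    then show False using one_way[of 0] c by auto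
  next
    case 2
    have "(c 1, c 2) \<in> B" using c(3)[of 1] 2 by (simp add: numeral_2_eq_2)
    with one_way[of 0] c 2 show False by (simp add: numeral_2_eq_2)
  next
    case 3
    \<comment> \<open>by asymmetry every edge of the cycle is a one-way edge, so the path
      \<open>c 0, \<dots>, c (n - 1)\<close> forbids the closing edge\<close>
    have "(c (n - 1), c 0) \<notin> B"
      using acyc unfolding acyclic_rel_on_def
    proof (elim allE[of _ "n - 1"] allE[of _ c] impE)
      show "2 \<le> n - 1" "\<forall>k\<le>n - 1. c k \<in> I" using 3 in_I by auto
      show "\<forall>k\<in>{1..n - 1}. (c (k - 1), c k) \<in> B \<and> (c k, c (k - 1)) \<notin> B"
      proof
        fix k assume "k \<in> {1..n - 1}"
        then have "k - 1 < n" and "Suc (k - 1) = k" by auto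
        then show "(c (k - 1), c k) \<in> B \<and> (c k, c (k - 1)) \<notin> B"
          using c(3) one_way by metis
      qed
    qed
    moreover have "(c (n - 1), c n) \<in> B" using c(3)[of "n - 1"] 3 by simp
    ultimately show False using c by simp
  qed
qed

lemma finite_acyclic_ranking:
  assumes "finite A" and "finite r" and "acyclic r"
  shows "\<exists>f :: 'a \<Rightarrow> nat. inj_on f A \<and> (\<forall>x\<in>A. \<forall>y\<in>A. (x, y) \<in> r \<longrightarrow> f y < f x)"
  using \<open>finite A\<close>
proof (induction "card A" arbitrary: A)
  case 0
  then show ?case by simp
next
  case (Suc n)
  then have "A \<noteq> {}" by auto
  moreover have "wf (r\<inverse>)" using assms(2,3) by (rule finite_acyclic_wf_converse)
  ultimately obtain m where m: "m \<in> A" and m_source: "\<And>y. (m, y) \<in> r \<Longrightarrow> y \<notin> A"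
    by (metis converse_iff wfE_min')
  have "card (A - {m}) = n" using Suc m by simp
  then obtain f :: "'a \<Rightarrow> nat" where f: "inj_on f (A - {m})"
    "\<forall>x\<in>A - {m}. \<forall>y\<in>A - {m}. (x, y) \<in> r \<longrightarrow> f y < f x"
    using Suc by blast
  define g where "g x = (if x = m then 0 else Suc (f x))" for x
  have "inj_on g A" using f(1) unfolding g_def inj_on_def by auto
  moreover have "g y < g x" if "x \<in> A" "y \<in> A" "(x, y) \<in> r" for x y
    using that f(2) m_source unfolding g_def by auto
  ultimately show ?case by blast
qed

lemma strict_linear_order_on_has_best:
  assumes "strict_linear_order_on X r" and "finite A" and "A \<subseteq> X" and "A \<noteq> {}"
  shows "\<exists>x\<in>A. \<forall>y\<in>A. y \<noteq> x \<longrightarrow> (x, y) \<in> r"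
proof -
  have "acyclic r" using assms(1) by (simp add: strict_linear_order_on_def acyclic_irrefl)
  then have "wf (r \<inter> A \<times> A)"
    using \<open>finite A\<close> by (intro finite_acyclic_wf) (auto intro: acyclic_subset)
  then obtain x where x: "x \<in> A" and minimal: "\<And>y. (y, x) \<in> r \<inter> A \<times> A \<Longrightarrow> y \<notin> A"
    using \<open>A \<noteq> {}\<close> by (metis wfE_min')
  have "(x, y) \<in> r" if "y \<in> A" "y \<noteq> x" for y
    using assms(1,3) x minimal[of y] that unfolding strict_linear_order_on_def total_on_def by blast
  with x show ?thesis by blast
qed

locale ranked_market =
  fixes I :: "'i set" and S :: "'s set" and P :: "'i \<Rightarrow> 's option rel"
    and q :: "'s \<Rightarrow> nat" and f :: "'s \<Rightarrow> 'i \<Rightarrow> nat"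
  assumes finite_students: "finite I" and finite_schools: "finite S"
    and pref_linear: "i \<in> I \<Longrightarrow> strict_linear_order_on (insert None (Some ` S)) (P i)"
    and rank_inj: "s \<in> S \<Longrightarrow> inj_on (f s) I"
begin

text \<open>A family \<open>R\<close> records for each student the schools that have rejected her; every
  student applies to her favourite option outside \<open>R i\<close>, and school \<open>s\<close> prefers
  students of larger rank \<open>f s\<close>.\<close>

definition unrejected :: "'s set \<Rightarrow> 's option set" where
  "unrejected R = insert None (Some ` (S - R))"

definition favourite :: "'i \<Rightarrow> 's set \<Rightarrow> 's option" where
  "favourite i R = (SOME x. x \<in> unrejected R \<and> (\<forall>y\<in>unrejected R. y \<noteq> x \<longrightarrow> (x, y) \<in> P i))"

definition applicants :: "('i \<Rightarrow> 's set) \<Rightarrow> 's \<Rightarrow> 'i set" where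
  "applicants R s = {i \<in> I. favourite i (R i) = Some s}"

definition justified :: "('i \<Rightarrow> 's set) \<Rightarrow> bool" where
  "justified R \<longleftrightarrow> (\<forall>i\<in>I. R i \<subseteq> S) \<and>
     (\<forall>i\<in>I. \<forall>s\<in>R i. q s \<le> card {k \<in> applicants R s. f s i < f s k})"

definition rejection_count :: "('i \<Rightarrow> 's set) \<Rightarrow> nat" where
  "rejection_count R = (\<Sum>i\<in>I. card (R i))"

lemma favourite_best:
  assumes "i \<in> I"
  shows "favourite i R \<in> unrejected R \<and>
    (\<forall>y\<in>unrejected R. y \<noteq> favourite i R \<longrightarrow> (favourite i R, y) \<in> P i)"
proof -
  have options: "finite (unrejected R)" "unrejected R \<subseteq> insert None (Some ` S)" "unrejected R \<noteq> {}"
    using finite_schools by (auto simp: unrejected_def)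
  then obtain x where "x \<in> unrejected R \<and> (\<forall>y\<in>unrejected R. y \<noteq> x \<longrightarrow> (x, y) \<in> P i)"
    using strict_linear_order_on_has_best[OF pref_linear[OF assms]] by blast
  then show ?thesis unfolding favourite_def by (rule someI)
qed

lemma favourite_unrejected: "i \<in> I \<Longrightarrow> favourite i R \<in> unrejected R"
  using favourite_best by simp

lemma rejected_if_preferred_to_favourite:
  assumes "i \<in> I" and "s \<in> S" and "(Some s, favourite i R) \<in> P i"
  shows "s \<in> R"
proof (rule ccontr)
  assume "s \<notin> R"
  then have "Some s \<in> unrejected R" using \<open>s \<in> S\<close> by (simp add: unrejected_def)
  moreover have "Some s \<noteq> favourite i R" and "trans (P i)" and "irrefl (P i)"
    using assms pref_linear[OF \<open>i \<in> I\<close>]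
    by (auto simp: strict_linear_order_on_def irrefl_def)
  ultimately show False
    using favourite_best[OF \<open>i \<in> I\<close>] assms(3) by (meson irrefl_def transD)
qed

lemma finite_applicants: "finite (applicants R s)"
  using finite_students by (simp add: applicants_def)

lemma justified_empty: "justified (\<lambda>_. {})"
  by (simp add: justified_def)

lemma rejection_count_bounded:
  assumes "justified R"
  shows "rejection_count R < Suc (card I * card S)"
proof -
  have "rejection_count R \<le> (\<Sum>i\<in>I. card S)" unfolding rejection_count_def
    using assms finite_schools by (intro sum_mono card_mono) (auto simp: justified_def)
  then show ?thesis by simp
qed

lemma applicants_reject_other:
  assumes "j \<in> applicants R s" and "s' \<noteq> s"
  shows "applicants R s' \<subseteq> applicants (R(j := insert s (R j))) s'"
  using assms by (auto simp: applicants_def)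

lemma applicants_reject_same:
  assumes "j \<in> applicants R s"
  shows "applicants (R(j := insert s (R j))) s = applicants R s - {j}"
proof -
  have "favourite j (insert s (R j)) \<noteq> Some s"
    using assms favourite_unrejected[of j "insert s (R j)"]
    by (auto simp: applicants_def unrejected_def)
  then show ?thesis by (auto simp: applicants_def)
qed

lemma justified_reject:
  assumes R: "justified R" and "s \<in> S" and over: "q s < card (applicants R s)"
    and j: "j \<in> applicants R s" and j_lowest: "\<And>k. k \<in> applicants R s \<Longrightarrow> f s j \<le> f s k"
  shows "justified (R(j := insert s (R j)))"
proof -
  define R' where "R' = R(j := insert s (R j))"
  have "j \<in> I" using j by (simp add: applicants_def)
  have j_strictly_lowest: "f s j < f s k" if "k \<in> applicants R s" "k \<noteq> j" for k
    using j_lowest[OF that(1)] inj_onD[OF rank_inj[OF \<open>s \<in> S\<close>], of j k] that \<open>j \<in> I\<close>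
    by (fastforce simp: applicants_def)
  have remaining: "q s \<le> card (applicants R s - {j})"
    using over j finite_applicants by simp
  have "q s' \<le> card {k \<in> applicants R' s'. f s' i < f s' k}" if "i \<in> I" "s' \<in> R' i" for i s'
  proof (cases "s' = s")
    case False
    then have "s' \<in> R i" using that by (auto simp: R'_def split: if_splits)
    then have "q s' \<le> card {k \<in> applicants R s'. f s' i < f s' k}"
      using R \<open>i \<in> I\<close> by (simp add: justified_def)
    also have "\<dots> \<le> card {k \<in> applicants R' s'. f s' i < f s' k}"
      using applicants_reject_other[OF j False] finite_applicants
      unfolding R'_def by (intro card_mono) auto
    finally show ?thesis .
  next
    case True
    have same: "applicants R' s = applicants R s - {j}"
      unfolding R'_def by (rule applicants_reject_same[OF j])
    show ?thesis
    proof (cases "i = j")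
      case True
      then have "{k \<in> applicants R' s. f s i < f s k} = applicants R s - {j}"
        using same j_strictly_lowest by auto
      then show ?thesis using remaining \<open>s' = s\<close> by simp
    next
      case False
      then have "s \<in> R i" using that \<open>s' = s\<close> by (simp add: R'_def)
      define X where "X = {k \<in> applicants R s. f s i < f s k}"
      have "q s \<le> card X" using R \<open>i \<in> I\<close> \<open>s \<in> R i\<close> by (simp add: justified_def X_def)
      moreover have "X = applicants R s" if "j \<in> X"
        using that j_lowest by (fastforce simp: X_def)
      ultimately have "q s \<le> card (X - {j})"
        using remaining by (cases "j \<in> X") auto
      moreover have "{k \<in> applicants R' s. f s i < f s k} = X - {j}"
        using same by (auto simp: X_def)
      ultimately show ?thesis using \<open>s' = s\<close> by simp
    qed
  qed
  moreover have "\<forall>i\<in>I. R' i \<subseteq> S" using R \<open>s \<in> S\<close> by (auto simp: R'_def justified_def)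
  ultimately show ?thesis unfolding R'_def justified_def by blast
qed

lemma rejection_count_reject:
  assumes "j \<in> I" and "s \<notin> R j" and "finite (R j)"
  shows "rejection_count (R(j := insert s (R j))) = Suc (rejection_count R)"
proof -
  let ?R' = "R(j := insert s (R j))"
  have "rejection_count ?R' = card (insert s (R j)) + (\<Sum>i\<in>I - {j}. card (?R' i))"
    unfolding rejection_count_def using finite_students assms(1) by (simp add: sum.remove)
  also have "(\<Sum>i\<in>I - {j}. card (?R' i)) = (\<Sum>i\<in>I - {j}. card (R i))"
    by (rule sum.cong) auto
  also have "card (insert s (R j)) + (\<Sum>i\<in>I - {j}. card (R i)) = Suc (rejection_count R)"
    unfolding rejection_count_def using finite_students assms by (simp add: sum.remove)
  finally show ?thesis .
qed

lemma exists_justified_within_capacities: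
  "\<exists>R. justified R \<and> (\<forall>s\<in>S. card (applicants R s) \<le> q s)"
proof -
  obtain R where R: "justified R" and R_max: "\<And>R'. justified R' \<Longrightarrow> rejection_count R' \<le> rejection_count R"
    using ex_has_greatest_nat[of justified "\<lambda>_. {}" rejection_count "Suc (card I * card S)"]
      justified_empty rejection_count_bounded by blast
  have "card (applicants R s) \<le> q s" if "s \<in> S" for s
  proof (rule ccontr)
    assume over: "\<not> card (applicants R s) \<le> q s"
    then obtain j where j: "j \<in> applicants R s"
      and j_lowest: "\<And>k. k \<in> applicants R s \<Longrightarrow> f s j \<le> f s k"
      using ex_has_least_nat[of "\<lambda>k. k \<in> applicants R s" _ "f s"] by (metis card.empty le0 ex_in_conv)
    have "j \<in> I" and "s \<notin> R j"
      using j favourite_unrejected[of j "R j"] by (auto simp: applicants_def unrejected_def)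
    moreover have "finite (R j)"
      using R \<open>j \<in> I\<close> finite_schools by (auto simp: justified_def intro: finite_subset)
    ultimately have "rejection_count (R(j := insert s (R j))) = Suc (rejection_count R)"
      by (rule rejection_count_reject)
    moreover have "justified (R(j := insert s (R j)))"
      using R \<open>s \<in> S\<close> over j j_lowest by (intro justified_reject) auto
    ultimately show False using R_max by fastforce
  qed
  with R show ?thesis by blast
qed

lemma rejecting_school_full:
  assumes "justified R" and "card (applicants R s) \<le> q s" and "i \<in> I" and "s \<in> R i"
  shows "card (applicants R s) = q s" and "\<And>k. k \<in> applicants R s \<Longrightarrow> f s i < f s k"
proof -
  let ?above = "{k \<in> applicants R s. f s i < f s k}"
  have "q s \<le> card ?above" using assms(1,3,4) by (simp add: justified_def)
  moreover have "card ?above \<le> card (applicants R s)"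
    using finite_applicants by (intro card_mono) auto
  ultimately have "card ?above = card (applicants R s)" and "card (applicants R s) = q s"
    using assms(2) by linarith+
  then have "?above = applicants R s"
    using finite_applicants by (intro card_subset_eq) auto
  then show "card (applicants R s) = q s" and "\<And>k. k \<in> applicants R s \<Longrightarrow> f s i < f s k"
    using \<open>card (applicants R s) = q s\<close> by blast+
qed

lemma stable_if_justified_within_capacities:
  assumes R: "justified R" and within: "\<forall>s\<in>S. card (applicants R s) \<le> q s"
    and ranks: "\<forall>s\<in>S. \<forall>i\<in>I. \<forall>j\<in>I. (i, j) \<in> pri s \<longrightarrow> f s j < f s i"
  shows "stable I S P q pri (\<lambda>i. if i \<in> I then favourite i (R i) else None)"
    (is "stable I S P q pri ?\<mu>")
proof -
  have assigned: "{j \<in> I. ?\<mu> j = Some s} = applicants R s" for s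
    by (auto simp: applicants_def)
  have rejected: "s \<in> R i" if "i \<in> I" "s \<in> S" "(Some s, ?\<mu> i) \<in> P i" for i s
    using that by (auto intro: rejected_if_preferred_to_favourite)
  have "?\<mu> i \<in> insert None (Some ` S)" if "i \<in> I" for i
    using favourite_unrejected[OF that, of "R i"] that by (auto simp: unrejected_def)
  then have "is_matching I S q ?\<mu>"
    using within assigned by (simp add: is_matching_def)
  moreover have "weakpref (P i) (?\<mu> i) None" if "i \<in> I" for i
    using favourite_best[OF that, of "R i"] that by (auto simp: weakpref_def unrejected_def)
  moreover have "card {j \<in> I. ?\<mu> j = Some s} = q s"
    if "i \<in> I" "s \<in> S" "(Some s, ?\<mu> i) \<in> P i" for i s
    using rejecting_school_full(1)[OF R _ \<open>i \<in> I\<close> rejected[OF that]] within that assigned by simp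
  moreover have False
    if "s \<in> S" "i \<in> I" "j \<in> I" "?\<mu> j = Some s" "?\<mu> i \<noteq> Some s"
      "weakpref (P i) (Some s) (?\<mu> i)" "(i, j) \<in> pri s" for s i j
  proof -
    have "s \<in> R i" using that by (intro rejected) (auto simp: weakpref_def)
    then have "f s i < f s j"
      using rejecting_school_full(2)[OF R _ \<open>i \<in> I\<close>] within that assigned by blast
    with ranks that show False by fastforce
  qed
  ultimately show ?thesis unfolding stable_def by blast
qed

lemma stable_matching_exists:
  assumes "\<forall>s\<in>S. \<forall>i\<in>I. \<forall>j\<in>I. (i, j) \<in> pri s \<longrightarrow> f s j < f s i"
  shows "stable_set I S P q pri \<noteq> {}"
  using exists_justified_within_capacities stable_if_justified_within_capacities[OF _ _ assms]
  by (auto simp: stable_set_def)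

end

lemma stable_set_nonempty_if_acyclic_priorities:
  fixes I :: "'i set" and S :: "'s set" and pri :: "'s \<Rightarrow> 'i rel"
  assumes "finite I" and "finite S"
    and "\<forall>i\<in>I. strict_linear_order_on (insert None (Some ` S)) (P i)"
    and "\<forall>s\<in>S. asym_on I (pri s) \<and> pri s \<subseteq> I \<times> I"
    and "\<forall>s\<in>S. acyclic_rel_on I (pri s)"
  shows "stable_set I S P q pri \<noteq> {}"
proof -
  have "\<exists>g :: 'i \<Rightarrow> nat. inj_on g I \<and> (\<forall>i\<in>I. \<forall>j\<in>I. (i, j) \<in> pri s \<longrightarrow> g j < g i)"
    if "s \<in> S" for s
  proof (rule finite_acyclic_ranking[OF \<open>finite I\<close>])
    have "asym_on I (pri s)" and "pri s \<subseteq> I \<times> I" and "acyclic_rel_on I (pri s)"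
      using assms(4,5) that by simp_all
    then show "acyclic (pri s)" by (rule acyclic_if_acyclic_rel_on)
    show "finite (pri s)"
      using \<open>pri s \<subseteq> I \<times> I\<close> by (rule finite_subset) (simp add: assms(1))
  qed
  then have "\<forall>s\<in>S. \<exists>g :: 'i \<Rightarrow> nat. inj_on g I \<and> (\<forall>i\<in>I. \<forall>j\<in>I. (i, j) \<in> pri s \<longrightarrow> g j < g i)"
    by blast
  then obtain f :: "'s \<Rightarrow> 'i \<Rightarrow> nat" where
    f: "\<forall>s\<in>S. inj_on (f s) I \<and> (\<forall>i\<in>I. \<forall>j\<in>I. (i, j) \<in> pri s \<longrightarrow> f s j < f s i)"
    by (auto dest: bchoice)
  interpret ranked_market I S P q f
    using assms(1-3) f by unfold_locales auto
  show ?thesis using f by (intro stable_matching_exists) auto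
qed

definition welfare :: "'i set \<Rightarrow> 'a set \<Rightarrow> ('i \<Rightarrow> 'a rel) \<Rightarrow> ('i \<Rightarrow> 'a) \<Rightarrow> nat" where
  "welfare I X P \<mu> = (\<Sum>i\<in>I. card {y \<in> X. (\<mu> i, y) \<in> P i})"

lemma welfare_less_if_pareto_dominates:
  assumes "finite I" and "finite X"
    and orders: "\<And>i. i \<in> I \<Longrightarrow> trans (P i) \<and> irrefl (P i) \<and> P i \<subseteq> X \<times> X"
    and "pareto_dominates I P \<nu> \<mu>"
  shows "welfare I X P \<mu> < welfare I X P \<nu>"
proof -
  let ?beaten = "\<lambda>\<mu> i. {y \<in> X. (\<mu> i, y) \<in> P i}"
  have weak: "weakpref (P i) (\<nu> i) (\<mu> i)" if "i \<in> I" for i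
    using assms(4) that by (simp add: pareto_dominates_def)
  have beaten_mono: "?beaten \<mu> i \<subseteq> ?beaten \<nu> i" if "i \<in> I" for i
    using weak[OF that] orders[OF that] by (auto simp: weakpref_def dest: transD)
  obtain i where "i \<in> I" and better: "(\<nu> i, \<mu> i) \<in> P i"
    using assms(4) by (auto simp: pareto_dominates_def)
  then have "\<mu> i \<in> ?beaten \<nu> i - ?beaten \<mu> i"
    using orders[OF \<open>i \<in> I\<close>] by (auto simp: irrefl_def)
  then have "card (?beaten \<mu> i) < card (?beaten \<nu> i)"
    using beaten_mono[OF \<open>i \<in> I\<close>] \<open>finite X\<close> by (intro psubset_card_mono) auto
  moreover have "card (?beaten \<mu> i) \<le> card (?beaten \<nu> i)" if "i \<in> I" for i
    using beaten_mono[OF that] \<open>finite X\<close> by (intro card_mono) auto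
  ultimately show ?thesis
    unfolding welfare_def using \<open>finite I\<close> \<open>i \<in> I\<close> by (intro sum_strict_mono_ex1) auto
qed

lemma exists_pareto_undominated:
  assumes "finite I" and "finite X"
    and "\<And>i. i \<in> I \<Longrightarrow> trans (P i) \<and> irrefl (P i) \<and> P i \<subseteq> X \<times> X"
    and "\<mu>\<^sub>0 \<in> M"
  shows "\<exists>\<mu>\<in>M. \<not> (\<exists>\<nu>\<in>M. pareto_dominates I P \<nu> \<mu>)"
proof -
  have "welfare I X P \<mu> < Suc (card I * card X)" for \<mu>
  proof -
    have "welfare I X P \<mu> \<le> (\<Sum>i\<in>I. card X)"
      unfolding welfare_def using \<open>finite X\<close> by (intro sum_mono card_mono) auto
    then show ?thesis by simp
  qed
  then obtain \<mu> where "\<mu> \<in> M" and max: "\<And>\<nu>. \<nu> \<in> M \<Longrightarrow> welfare I X P \<nu> \<le> welfare I X P \<mu>"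
    using ex_has_greatest_nat[of "\<lambda>\<mu>. \<mu> \<in> M" \<mu>\<^sub>0 "welfare I X P"] assms(4) by blast
  have False if "\<nu> \<in> M" and "pareto_dominates I P \<nu> \<mu>" for \<nu>
    using max[OF that(1)] welfare_less_if_pareto_dominates[OF assms(1-3) that(2)] by simp
  with \<open>\<mu> \<in> M\<close> show ?thesis by blast
qed

theorem corollary1:
  fixes I :: "'i set" and S :: "'s set"
    and P :: "'i \<Rightarrow> ('s option) rel" and q :: "'s \<Rightarrow> nat" and pri :: "'s \<Rightarrow> 'i rel"
  assumes "finite I" and "card I \<ge> 3" and "finite S"
    and "\<forall>i\<in>I. strict_linear_order_on (insert None (Some ` S)) (P i)
               \<and> P i \<subseteq> insert None (Some ` S) \<times> insert None (Some ` S)"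
    and "\<forall>s\<in>S. q s > 0"
    and "\<forall>s\<in>S. asym_on I (pri s) \<and> pri s \<subseteq> I \<times> I"
    and "\<forall>s\<in>S. acyclic_rel_on I (pri s)"
  shows "SOSM_set I S P q pri \<noteq> {} \<and> stable_set I S P q pri \<noteq> {}"
proof -
  have "stable_set I S P q pri \<noteq> {}"
    using assms(1,3,4,6,7) by (intro stable_set_nonempty_if_acyclic_priorities) auto
  then obtain \<mu>\<^sub>0 where stable: "\<mu>\<^sub>0 \<in> stable_set I S P q pri" by blast
  have options: "finite (insert None (Some ` S))" using assms(3) by simp
  have orders: "trans (P i) \<and> irrefl (P i) \<and> P i \<subseteq> insert None (Some ` S) \<times> insert None (Some ` S)"
    if "i \<in> I" for i
    using assms(4) that by (simp add: strict_linear_order_on_def)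
  from exists_pareto_undominated[where P = P, OF assms(1) options orders stable]
  show ?thesis by (auto simp: SOSM_set_def)
qed

end
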